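(* Let $Y_k=(y_{1k},\dots,y_{sk})'\in\mathbb{R}^s_{\ge 0}$, $k\in E$, for a finite nonempty set $E$, and let $\mathrm{DMU}_j$ have outputs $y_{1j},\dots,y_{sj}>0$. Fix $r$, let $Q>0$, $\omega\in[0,1]$, and let $$p_{rj}(s)=\begin{cases} Q\omega, & s\le 0,\\ Q\omega\left(1-\frac{s}{y_{rj}}\right), & 0\le s\le y_{rj},\\ 0, & s\ge y_{rj}.\end{cases}$$ Set $M_1=y_{rj}$ and $M_2=\max_{k\in E}\{y_{rk}\}$. Then for every $\lambda_{kj}\ge 0$ ($k\in E$) and $s_{rj}\in\mathbb{R}$ with $\sum_{k\in E}\lambda_{kj}y_{rk}=y_{rj}+s_{rj}$ and $\sum_{k\in E}\lambda_{kj}=1$, there exist binary $I^1_{rj},I^2_{rj},I^3_{rj}\in\{0,1\}$ with $I^1_{rj}+I^2_{rj}+I^3_{rj}=1$ satisfying $$y_{rj}I^3_{rj}-M_1I^1_{rj}\le s_{rj}\le y_{rj}I^2_{rj}+M_2I^3_{rj},$$ and for every such choice of binaries, $p_{rj}(s_{rj})=Q\omega I^1_{rj}+Q\omega\left(1-\frac{s_{rj}}{y_{rj}}\right)I^2_{rj}$. That is, these values of $M_1$ and $M_2$ suffice in the linear representation of the payment function.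
   Context: $E$ is the set of extreme efficient DMUs of the attainable set generated by the DMUs' output vectors; $s_{rj}$ is the deviation of a target (a convex combination of the $Y_k$, $k\in E$) from the actual value $y_{rj}$; $Q$ is the incentive amount available to $\mathrm{DMU}_j$ and $\omega$ the weight of indicator $r$. *)

theory Defs
  imports Complex_Main
begin

definition payment :: "real \<Rightarrow> real \<Rightarrow> real \<Rightarrow> real \<Rightarrow> real" where
  "payment Q w yrj s =
     (if s \<le> 0 then Q * w
      else if s \<le> yrj then Q * w * (1 - s / yrj)
      else 0)"

end

theory Submission
  imports Defs
begin

text \<open>The target value \<open>y + s\<close> is a convex combination of the nonnegative values \<open>Y k r\<close>, so it
  lies in \<open>[0, M2]\<close>; hence \<open>-M1 \<le> s \<le> M2\<close>, and on this range the three binaries can select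
  the piece of the payment function containing \<open>s\<close>. Conversely, the big-M constraints force
  \<open>s\<close> into the piece selected by the binaries, where the payment equals the stated formula.\<close>

lemma convex_combination_le_Max:
  fixes f lam :: "'k \<Rightarrow> real"
  assumes "finite E" and "\<forall>k\<in>E. lam k \<ge> 0" and "(\<Sum>k\<in>E. lam k) = 1"
  shows "(\<Sum>k\<in>E. lam k * f k) \<le> Max (f ` E)"
proof -
  have "(\<Sum>k\<in>E. lam k * f k) \<le> (\<Sum>k\<in>E. lam k * Max (f ` E))"
    using assms(1,2) by (intro sum_mono mult_left_mono Max_ge) auto
  also have "\<dots> = Max (f ` E)"
    using assms(3) by (simp add: sum_distrib_right[symmetric])
  finally show ?thesis .
qed

definition big_M_selection :: "real \<Rightarrow> real \<Rightarrow> real \<Rightarrow> real \<Rightarrow> real \<Rightarrow> real \<Rightarrow> real \<Rightarrow> bool" where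
  "big_M_selection y M1 M2 s I1 I2 I3 \<longleftrightarrow>
     I1 \<in> {0,1} \<and> I2 \<in> {0,1} \<and> I3 \<in> {0,1} \<and> I1 + I2 + I3 = 1
     \<and> y * I3 - M1 * I1 \<le> s \<and> s \<le> y * I2 + M2 * I3"

lemma big_M_selection_exists:
  assumes "- M1 \<le> s" and "s \<le> M2"
  shows "\<exists>I1 I2 I3. big_M_selection y M1 M2 s I1 I2 I3"
proof (cases "s \<le> 0")
  case True
  then have "big_M_selection y M1 M2 s 1 0 0"
    using assms by (simp add: big_M_selection_def)
  then show ?thesis by blast
next
  case False
  show ?thesis
  proof (cases "s \<le> y")
    case True
    then have "big_M_selection y M1 M2 s 0 1 0"
      using False by (simp add: big_M_selection_def)
    then show ?thesis by blast
  next
    case above: False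
    then have "big_M_selection y M1 M2 s 0 0 1"
      using assms by (simp add: big_M_selection_def)
    then show ?thesis by blast
  qed
qed

lemma payment_eq_big_M_selection:
  assumes "0 < y" and "big_M_selection y M1 M2 s I1 I2 I3"
  shows "payment Q w y s = Q * w * I1 + Q * w * (1 - s / y) * I2"
proof -
  consider "I1 = 1" "I2 = 0" "I3 = 0" | "I1 = 0" "I2 = 1" "I3 = 0" | "I1 = 0" "I2 = 0" "I3 = 1"
    using assms(2) unfolding big_M_selection_def by auto
  then show ?thesis
  proof cases
    case 1
    then have "s \<le> 0" using assms(2) by (simp add: big_M_selection_def)
    then show ?thesis using 1 by (simp add: payment_def)
  next
    case 2
    then have "0 \<le> s" "s \<le> y" using assms(2) by (simp_all add: big_M_selection_def)
    then show ?thesis using 2 assms(1) by (simp add: payment_def)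
  next
    case 3
    then have "y \<le> s" using assms(2) by (simp add: big_M_selection_def)
    then show ?thesis using 3 assms(1) by (simp add: payment_def)
  qed
qed

theorem corollary1:
  fixes E :: "'k set" and Y :: "'k \<Rightarrow> nat \<Rightarrow> real" and yj :: "nat \<Rightarrow> real"
    and s :: nat and r :: nat and Q \<omega> :: real
  assumes "finite E" and "E \<noteq> {}"
    and "\<forall>k\<in>E. \<forall>i\<in>{1..s}. Y k i \<ge> 0"
    and "\<forall>i\<in>{1..s}. yj i > 0"
    and "r \<in> {1..s}"
    and "Q > 0" and "0 \<le> \<omega>" and "\<omega> \<le> 1"
  defines "M1 \<equiv> yj r"
    and "M2 \<equiv> Max ((\<lambda>k. Y k r) ` E)"
  shows "\<forall>(lam :: 'k \<Rightarrow> real) (srj :: real).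
           (\<forall>k\<in>E. lam k \<ge> 0) \<and> (\<Sum>k\<in>E. lam k * Y k r) = yj r + srj
           \<and> (\<Sum>k\<in>E. lam k) = 1 \<longrightarrow>
           (\<exists>I1 I2 I3 :: real. I1 \<in> {0,1} \<and> I2 \<in> {0,1} \<and> I3 \<in> {0,1}
               \<and> I1 + I2 + I3 = 1
               \<and> yj r * I3 - M1 * I1 \<le> srj \<and> srj \<le> yj r * I2 + M2 * I3)
         \<and> (\<forall>I1 I2 I3 :: real. I1 \<in> {0,1} \<and> I2 \<in> {0,1} \<and> I3 \<in> {0,1}
               \<and> I1 + I2 + I3 = 1
               \<and> yj r * I3 - M1 * I1 \<le> srj \<and> srj \<le> yj r * I2 + M2 * I3
             \<longrightarrow> payment Q \<omega> (yj r) srj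
                 = Q * \<omega> * I1 + Q * \<omega> * (1 - srj / yj r) * I2)"
  unfolding big_M_selection_def[symmetric]
proof (intro allI impI)
  fix lam :: "'k \<Rightarrow> real" and srj :: real
  assume lam: "(\<forall>k\<in>E. lam k \<ge> 0) \<and> (\<Sum>k\<in>E. lam k * Y k r) = yj r + srj
           \<and> (\<Sum>k\<in>E. lam k) = 1"
  have y_pos: "yj r > 0" using assms(4,5) by blast
  have "(\<Sum>k\<in>E. lam k * Y k r) \<ge> 0"
    using lam assms(3,5) by (intro sum_nonneg) auto
  then have lower: "- M1 \<le> srj" using lam unfolding M1_def by linarith
  have "(\<Sum>k\<in>E. lam k * Y k r) \<le> M2"
    unfolding M2_def using assms(1) lam by (intro convex_combination_le_Max) auto
  then have upper: "srj \<le> M2" using lam y_pos by linarith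
  show "(\<exists>I1 I2 I3. big_M_selection (yj r) M1 M2 srj I1 I2 I3)
    \<and> (\<forall>I1 I2 I3. big_M_selection (yj r) M1 M2 srj I1 I2 I3 \<longrightarrow>
         payment Q \<omega> (yj r) srj = Q * \<omega> * I1 + Q * \<omega> * (1 - srj / yj r) * I2)"
    using big_M_selection_exists[OF lower upper] payment_eq_big_M_selection[OF y_pos] by blast
qed

end
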